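(* Let $\mathbb{S}=[0,1]$ with $0$ and $1$ identified, and let $H:\mathbb{S}\times\mathbb{R}\times\mathbb{R}\to\mathbb{R}$ be $C^\infty$ with $\frac{\partial^2H}{\partial p^2}>0$, $p\mapsto H(x,p,u)$ superlinear for each $(x,u)$, and $|\frac{\partial H}{\partial u}|\le\kappa$ for some $\kappa>0$. Let $u_0$ be a viscosity solution of $H(x,u'(x),u(x))=0$ on $\mathbb{S}$ such that $\frac{\partial H}{\partial p}(x,u_0'(x),u_0(x))\ne0$ at every differentiability point $x$ of $u_0$. Set $B(x)=\frac{\partial H}{\partial p}(x,u_0'(x),u_0(x))$, $$\mu=\frac{\int_0^1\frac{\partial H}{\partial u}(\tau,u_0'(\tau),u_0(\tau))B(\tau)^{-1}d\tau}{\int_0^1B(\tau)^{-1}d\tau},\qquad \rho(x)=\exp\left\{\int_0^x\frac{\mu-\frac{\partial H}{\partial u}(\tau,u_0'(\tau),u_0(\tau))}{B(\tau)}\,d\tau\right\}.$$ Assume $\mu>0$. For given $\Theta\in[0,\mu)$ set $w_\epsilon(x,t)=u_0(x)-\epsilon\rho(x)e^{-\Theta t}$. Then there exists $\tilde\epsilon_0=\tilde\epsilon_0(\Theta)>0$ such that: (1) for $\epsilon\in(0,\tilde\epsilon_0]$, $\partial_tw_\epsilon(x,t)+H(x,\partial_xw_\epsilon(x,t),w_\epsilon(x,t))\le0$ for all $(x,t)\in\mathbb{S}\times[0,+\infty)$; (2) for $\epsilon\in[-\tilde\epsilon_0,0)$, $\partial_tw_\epsilon(x,t)+H(x,\partial_xw_\epsilon(x,t),w_\epsilon(x,t))\ge0$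 for all $(x,t)\in\mathbb{S}\times[0,+\infty)$.
   Context: It is known that under these assumptions $u_0$ is of class $C^\infty$, so $B$ is smooth and nowhere zero, $\rho$ is a smooth positive function on $\mathbb{S}$, and $w_\epsilon$ is $C^\infty$ on $\mathbb{S}\times[0,\infty)$. *)

theory Defs
  imports "HOL-Analysis.Analysis"
begin

definition dir_deriv :: "'a::real_normed_vector \<Rightarrow> ('a \<Rightarrow> real) \<Rightarrow> 'a \<Rightarrow> real" where
  "dir_deriv v f = (\<lambda>x. frechet_derivative f (at x) v)"

definition smooth_everywhere :: "('a::real_normed_vector \<Rightarrow> real) \<Rightarrow> bool" where
  "smooth_everywhere f \<longleftrightarrow> (\<forall>vs x. (foldr dir_deriv vs f) differentiable (at x))"

text \<open>Functions on the circle S = [0,1]/(0~1) are represented as 1-periodic functions on R.\<close>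
definition periodic1 :: "(real \<Rightarrow> 'b) \<Rightarrow> bool" where
  "periodic1 f \<longleftrightarrow> (\<forall>x. f (x + 1) = f x)"

definition Hp :: "(real \<Rightarrow> real \<Rightarrow> real \<Rightarrow> real) \<Rightarrow> real \<Rightarrow> real \<Rightarrow> real \<Rightarrow> real" where
  "Hp H x p u = deriv (\<lambda>q. H x q u) p"
definition Hu :: "(real \<Rightarrow> real \<Rightarrow> real \<Rightarrow> real) \<Rightarrow> real \<Rightarrow> real \<Rightarrow> real \<Rightarrow> real" where
  "Hu H x p u = deriv (\<lambda>v. H x p v) u"
definition Hpp :: "(real \<Rightarrow> real \<Rightarrow> real \<Rightarrow> real) \<Rightarrow> real \<Rightarrow> real \<Rightarrow> real \<Rightarrow> real" where
  "Hpp H x p u = deriv (\<lambda>q. Hp H x q u) p"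

definition viscosity_solution_S :: "(real \<Rightarrow> real \<Rightarrow> real \<Rightarrow> real) \<Rightarrow> (real \<Rightarrow> real) \<Rightarrow> bool" where
  "viscosity_solution_S H u \<longleftrightarrow> continuous_on UNIV u \<and> periodic1 u \<and>
    (\<forall>x \<phi>. ((\<forall>y. \<phi> differentiable (at y)) \<and> continuous_on UNIV (deriv \<phi>)) \<longrightarrow>
       (((\<forall>\<^sub>F y in nhds x. u y - \<phi> y \<le> u x - \<phi> x) \<longrightarrow> H x (deriv \<phi> x) (u x) \<le> 0) \<and>
        ((\<forall>\<^sub>F y in nhds x. u y - \<phi> y \<ge> u x - \<phi> x) \<longrightarrow> H x (deriv \<phi> x) (u x) \<ge> 0)))"

definition oint0 :: "(real \<Rightarrow> real) \<Rightarrow> real \<Rightarrow> real" where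
  "oint0 f x = (if 0 \<le> x then integral {0..x} f else - integral {x..0} f)"

end

theory Submission
  imports Defs
begin

text \<open>
  Write \<open>g = (\<mu> - H\<^sub>u) / B\<close> along \<open>u\<^sub>0\<close>, so that \<open>\<rho> = exp (\<integral>\<^sub>0\<^sup>x g)\<close> is positive with
  \<open>\<rho>' = \<rho> g\<close>, i.e. \<open>B \<rho>' + H\<^sub>u \<rho> = \<mu> \<rho>\<close>: \<open>\<rho>\<close> is an eigenfunction, with eigenvalue \<open>\<mu>\<close>, of the
  linearisation of \<open>H\<close> at \<open>u\<^sub>0\<close>. With \<open>\<delta> = \<epsilon> exp (- \<Theta> t)\<close> the left-hand side equals
  \<open>F(x, \<delta>) = \<Theta> \<delta> \<rho> + H(x, u\<^sub>0' - \<delta> \<rho>', u\<^sub>0 - \<delta> \<rho>)\<close>, where \<open>F(x, 0) = 0\<close> because the smooth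
  viscosity solution \<open>u\<^sub>0\<close> is classical, and \<open>\<partial>\<^sub>\<delta>F(x, 0) = (\<Theta> - \<mu>) \<rho> < 0\<close>. By compactness of
  \<open>[0, 1]\<close> (tube lemma) \<open>\<partial>\<^sub>\<delta>F < 0\<close> for all \<open>|\<delta>| \<le> \<epsilon>\<^sub>0\<close>, so \<open>F\<close> has the sign opposite to \<open>\<delta>\<close> there.
\<close>

lemma has_real_derivative_along_line:
  fixes f :: "'a::real_normed_vector \<Rightarrow> real"
  assumes "f differentiable (at (a + s *\<^sub>R v))"
  shows "((\<lambda>s. f (a + s *\<^sub>R v)) has_real_derivative frechet_derivative f (at (a + s *\<^sub>R v)) v) (at s)"
proof -
  let ?L = "frechet_derivative f (at (a + s *\<^sub>R v))"
  have "(f has_derivative ?L) (at (a + s *\<^sub>R v))"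
    using assms frechet_derivative_works by blast
  moreover have "((\<lambda>s. a + s *\<^sub>R v) has_derivative (\<lambda>h. h *\<^sub>R v)) (at s)"
    by (auto intro!: derivative_eq_intros)
  ultimately have "((\<lambda>s. f (a + s *\<^sub>R v)) has_derivative (\<lambda>h. ?L (h *\<^sub>R v))) (at s)"
    using has_derivative_compose by blast
  moreover have "(\<lambda>h. ?L (h *\<^sub>R v)) = (*) (?L v)"
    using linear_scale[OF linear_frechet_derivative[OF assms]] by (auto simp: fun_eq_iff)
  ultimately show ?thesis
    by (simp add: has_field_derivative_def)
qed

lemma smooth_everywhere_imp_differentiable: "smooth_everywhere f \<Longrightarrow> f differentiable (at z)"
  unfolding smooth_everywhere_def by (metis foldr.simps(1) id_apply)

lemma smooth_everywhere_continuous_on_frechet_derivative: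
  assumes "smooth_everywhere f"
  shows "continuous_on UNIV (\<lambda>z. frechet_derivative f (at z) v)"
proof -
  have "dir_deriv v f differentiable (at z)" for z
    using assms unfolding smooth_everywhere_def by (metis foldr.simps(1) foldr_Cons id_apply o_apply)
  then have "continuous_on UNIV (dir_deriv v f)"
    by (simp add: continuous_at_imp_continuous_on differentiable_imp_continuous_within)
  then show ?thesis
    unfolding dir_deriv_def .
qed

lemma smooth_everywhere_continuous_on_deriv:
  fixes u :: "real \<Rightarrow> real"
  assumes "smooth_everywhere u"
  shows "continuous_on UNIV (deriv u)"
proof -
  have "deriv u x = frechet_derivative u (at x) 1" for x
  proof -
    have "(u has_real_derivative deriv u x) (at x)"
      using DERIV_deriv_iff_real_differentiable smooth_everywhere_imp_differentiable[OF assms] by blast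
    then have "frechet_derivative u (at x) = (*) (deriv u x)"
      unfolding has_field_derivative_def by (rule frechet_derivative_at[symmetric])
    then show ?thesis
      by simp
  qed
  then have "deriv u = (\<lambda>x. frechet_derivative u (at x) 1)"
    by (rule ext)
  then show ?thesis
    using smooth_everywhere_continuous_on_frechet_derivative[OF assms, of 1] by (simp only:)
qed

lemma oint0_has_real_derivative:
  fixes g :: "real \<Rightarrow> real"
  assumes g: "continuous_on UNIV g"
  shows "(oint0 g has_real_derivative g x) (at x)"
proof -
  define a where "a = min x 0 - 1"
  define I where "I y = integral {a..y} g" for y
  have integrable: "g integrable_on {c..d}" for c d
    using g by (meson continuous_on_subset integrable_continuous_interval subset_UNIV)
  have oint0_eq: "oint0 g y = I y - I 0" if "a < y" for y
  proof (cases "0 \<le> y")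
    case True
    have "integral {a..0} g + integral {0..y} g = integral {a..y} g"
      using Henstock_Kurzweil_Integration.integral_combine[OF _ _ integrable, of a 0 y] True by (simp add: a_def)
    then show ?thesis
      using True unfolding oint0_def I_def by simp
  next
    case False
    have "integral {a..y} g + integral {y..0} g = integral {a..0} g"
      using Henstock_Kurzweil_Integration.integral_combine[OF _ _ integrable, of a y 0] False that by simp
    then show ?thesis
      using False unfolding oint0_def I_def by simp
  qed
  have "(I has_real_derivative g x) (at x within {a..x+1})"
    unfolding I_def by (rule integral_has_real_derivative) (auto simp: a_def intro: continuous_on_subset[OF g])
  moreover have "at x within {a..x+1} = at x"
    by (rule at_within_interior) (auto simp: a_def)
  ultimately have "((\<lambda>y. I y - I 0) has_real_derivative g x) (at x)"
    by (auto intro!: derivative_eq_intros)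
  then show ?thesis
    by (rule has_field_derivative_transform_within_open[of _ _ _ "{a<..}"]) (auto simp: a_def oint0_eq)
qed

lemma exp_oint0_has_real_derivative:
  assumes "continuous_on UNIV g"
  shows "((\<lambda>x. exp (oint0 g x)) has_real_derivative exp (oint0 g x) * g x) (at x)"
  using oint0_has_real_derivative[OF assms] by (auto intro!: derivative_eq_intros)

lemma viscosity_solution_S_imp_classical:
  assumes "viscosity_solution_S H u" "\<And>y. u differentiable (at y)" "continuous_on UNIV (deriv u)"
  shows "H x (deriv u x) (u x) = 0"
proof -
  have "(\<forall>\<^sub>F y in nhds x. u y - u y \<le> u x - u x) \<longrightarrow> H x (deriv u x) (u x) \<le> 0"
       "(\<forall>\<^sub>F y in nhds x. u y - u y \<ge> u x - u x) \<longrightarrow> H x (deriv u x) (u x) \<ge> 0"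
    using assms(1)[unfolded viscosity_solution_S_def, THEN conjunct2, THEN conjunct2,
        rule_format, where \<phi> = u and x = x] assms(2,3) by simp_all
  then show ?thesis
    by simp
qed

lemma Hp_eq_frechet_derivative:
  assumes "(\<lambda>(x, p, u). H x p u) differentiable (at (x, p, u))"
  shows "Hp H x p u = frechet_derivative (\<lambda>(x, p, u). H x p u) (at (x, p, u)) (0, 1, 0)"
proof -
  have "((\<lambda>s. (\<lambda>(x, p, u). H x p u) ((x, 0, u) + s *\<^sub>R (0, 1, 0))) has_real_derivative
          frechet_derivative (\<lambda>(x, p, u). H x p u) (at ((x, 0, u) + p *\<^sub>R (0, 1, 0))) (0, 1, 0)) (at p)"
    by (rule has_real_derivative_along_line) (simp add: assms)
  then show ?thesis
    unfolding Hp_def by (intro DERIV_imp_deriv) simp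
qed

lemma Hu_eq_frechet_derivative:
  assumes "(\<lambda>(x, p, u). H x p u) differentiable (at (x, p, u))"
  shows "Hu H x p u = frechet_derivative (\<lambda>(x, p, u). H x p u) (at (x, p, u)) (0, 0, 1)"
proof -
  have "((\<lambda>s. (\<lambda>(x, p, u). H x p u) ((x, p, 0) + s *\<^sub>R (0, 0, 1))) has_real_derivative
          frechet_derivative (\<lambda>(x, p, u). H x p u) (at ((x, p, 0) + u *\<^sub>R (0, 0, 1))) (0, 0, 1)) (at u)"
    by (rule has_real_derivative_along_line) (simp add: assms)
  then show ?thesis
    unfolding Hu_def by (intro DERIV_imp_deriv) simp
qed

lemma has_real_derivative_H_along_line:
  assumes H_diff: "\<And>z. (\<lambda>(x, p, u). H x p u) differentiable (at z)"
  shows "((\<lambda>\<delta>. H x (p - \<delta> * a) (u - \<delta> * b)) has_real_derivative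
           - a * Hp H x (p - \<delta> * a) (u - \<delta> * b) - b * Hu H x (p - \<delta> * a) (u - \<delta> * b)) (at \<delta>)"
proof -
  let ?f = "\<lambda>(x, p, u). H x p u" and ?v = "(0, - a, - b)"
  let ?L = "frechet_derivative ?f (at (x, p - \<delta> * a, u - \<delta> * b))"
  have "((\<lambda>s. ?f ((x, p, u) + s *\<^sub>R ?v)) has_real_derivative ?L ?v) (at \<delta>)"
    using has_real_derivative_along_line[of ?f "(x, p, u)" \<delta> ?v] H_diff by (simp add: algebra_simps)
  moreover have "?L ?v = - a * ?L (0, 1, 0) - b * ?L (0, 0, 1)"
  proof -
    have v: "?v = (- a) *\<^sub>R (0, 1, 0) + (- b) *\<^sub>R (0, 0, 1)"
      by simp
    have L: "linear ?L"
      using linear_frechet_derivative[OF H_diff] .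
    show ?thesis
      by (subst v, simp only: linear_add[OF L] linear_scale[OF L]) simp
  qed
  ultimately show ?thesis
    by (simp add: Hp_eq_frechet_derivative Hu_eq_frechet_derivative H_diff algebra_simps)
qed

lemma continuous_on_Hp_compose:
  assumes "smooth_everywhere (\<lambda>(x, p, u). H x p u)"
    and "continuous_on S a" "continuous_on S b" "continuous_on S c"
  shows "continuous_on S (\<lambda>q. Hp H (a q) (b q) (c q))"
proof -
  have "continuous_on S (\<lambda>q. frechet_derivative (\<lambda>(x, p, u). H x p u) (at (a q, b q, c q)) (0, 1, 0))"
    by (rule continuous_on_compose2[OF smooth_everywhere_continuous_on_frechet_derivative[OF assms(1)]])
      (auto intro!: continuous_intros assms(2-4))
  then show ?thesis
    by (simp add: Hp_eq_frechet_derivative smooth_everywhere_imp_differentiable[OF assms(1)])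
qed

lemma continuous_on_Hu_compose:
  assumes "smooth_everywhere (\<lambda>(x, p, u). H x p u)"
    and "continuous_on S a" "continuous_on S b" "continuous_on S c"
  shows "continuous_on S (\<lambda>q. Hu H (a q) (b q) (c q))"
proof -
  have "continuous_on S (\<lambda>q. frechet_derivative (\<lambda>(x, p, u). H x p u) (at (a q, b q, c q)) (0, 0, 1))"
    by (rule continuous_on_compose2[OF smooth_everywhere_continuous_on_frechet_derivative[OF assms(1)]])
      (auto intro!: continuous_intros assms(2-4))
  then show ?thesis
    by (simp add: Hu_eq_frechet_derivative smooth_everywhere_imp_differentiable[OF assms(1)])
qed

lemma negative_near_zero_uniformly_on_compact:
  fixes G :: "'a::topological_space \<Rightarrow> real \<Rightarrow> real"
  assumes "compact S" and G_cont: "continuous_on UNIV (\<lambda>(\<delta>, x). G x \<delta>)"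
    and G_neg: "\<And>x. x \<in> S \<Longrightarrow> G x 0 < 0"
  obtains e where "e > 0" "\<And>x \<delta>. x \<in> S \<Longrightarrow> \<bar>\<delta>\<bar> \<le> e \<Longrightarrow> G x \<delta> < 0"
proof -
  define W where "W = {q. (\<lambda>(\<delta>, x). G x \<delta>) q < 0}"
  have "open W"
    unfolding W_def using open_Collect_less[OF G_cont continuous_on_const] .
  moreover have "{0} \<times> S \<subseteq> W"
    unfolding W_def using G_neg by auto
  ultimately obtain X where "0 \<in> X" "open X" and X: "X \<times> S \<subseteq> W"
    using Elementary_Topology.tube_lemma[OF \<open>compact S\<close>, of W 0] by blast
  then obtain r where "r > 0" "ball 0 r \<subseteq> X"
    by (meson openE)
  show thesis
  proof (rule that[of "r / 2"])
    show "r / 2 > 0"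
      using \<open>r > 0\<close> by simp
    show "G x \<delta> < 0" if "x \<in> S" "\<bar>\<delta>\<bar> \<le> r / 2" for x \<delta>
    proof -
      have "\<delta> \<in> ball 0 r"
        using that \<open>r > 0\<close> by simp
      with \<open>ball 0 r \<subseteq> X\<close> have "\<delta> \<in> X"
        by blast
      with X \<open>x \<in> S\<close> have "(\<delta>, x) \<in> W"
        by (meson mem_Sigma_iff subsetD)
      then show ?thesis
        by (simp add: W_def)
    qed
  qed
qed

lemma eigenfunction_perturbation_sign:
  fixes H :: "real \<Rightarrow> real \<Rightarrow> real \<Rightarrow> real" and u u' \<rho> \<rho>' :: "real \<Rightarrow> real"
  assumes H_smooth: "smooth_everywhere (\<lambda>(x, p, u). H x p u)"
    and cont: "continuous_on UNIV u" "continuous_on UNIV u'" "continuous_on UNIV \<rho>" "continuous_on UNIV \<rho>'"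
    and "compact S"
    and solution: "\<And>x. x \<in> S \<Longrightarrow> H x (u' x) (u x) = 0"
    and eigen: "\<And>x. x \<in> S \<Longrightarrow> Hp H x (u' x) (u x) * \<rho>' x + Hu H x (u' x) (u x) * \<rho> x = \<mu> * \<rho> x"
    and \<rho>_pos: "\<And>x. x \<in> S \<Longrightarrow> \<rho> x > 0"
    and "\<Theta> < \<mu>"
  obtains e where "e > 0"
    "\<And>x \<delta>. x \<in> S \<Longrightarrow> 0 < \<delta> \<Longrightarrow> \<delta> \<le> e \<Longrightarrow>
       \<Theta> * \<delta> * \<rho> x + H x (u' x - \<delta> * \<rho>' x) (u x - \<delta> * \<rho> x) < 0"
    "\<And>x \<delta>. x \<in> S \<Longrightarrow> - e \<le> \<delta> \<Longrightarrow> \<delta> < 0 \<Longrightarrow>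
       \<Theta> * \<delta> * \<rho> x + H x (u' x - \<delta> * \<rho>' x) (u x - \<delta> * \<rho> x) > 0"
proof -
  define F where "F x \<delta> = \<Theta> * \<delta> * \<rho> x + H x (u' x - \<delta> * \<rho>' x) (u x - \<delta> * \<rho> x)" for x \<delta>
  define G where "G x \<delta> = \<Theta> * \<rho> x - \<rho>' x * Hp H x (u' x - \<delta> * \<rho>' x) (u x - \<delta> * \<rho> x)
    - \<rho> x * Hu H x (u' x - \<delta> * \<rho>' x) (u x - \<delta> * \<rho> x)" for x \<delta>
  have F_deriv: "(F x has_real_derivative G x \<delta>) (at \<delta>)" for x \<delta>
  proof -
    have "((\<lambda>\<delta>. \<Theta> * \<delta> * \<rho> x) has_real_derivative \<Theta> * \<rho> x) (at \<delta>)"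
      by (auto intro!: derivative_eq_intros)
    from DERIV_add[OF this has_real_derivative_H_along_line[OF smooth_everywhere_imp_differentiable[OF H_smooth],
        where x = x and p = "u' x" and a = "\<rho>' x" and u = "u x" and b = "\<rho> x"]]
    show ?thesis
      unfolding F_def G_def by (simp add: algebra_simps)
  qed
  have "continuous_on UNIV (\<lambda>q. G (snd q) (fst q))"
    unfolding G_def
    by (intro continuous_intros continuous_on_Hp_compose[OF H_smooth] continuous_on_Hu_compose[OF H_smooth]
        continuous_on_compose2[OF cont(1)] continuous_on_compose2[OF cont(2)]
        continuous_on_compose2[OF cont(3)] continuous_on_compose2[OF cont(4)]) auto
  then have G_cont: "continuous_on UNIV (\<lambda>(\<delta>, x). G x \<delta>)"
    by (simp add: case_prod_beta')
  have "G x 0 = (\<Theta> - \<mu>) * \<rho> x" if "x \<in> S" for x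
    using eigen[OF that] unfolding G_def by (simp add: algebra_simps)
  then have G_zero_neg: "G x 0 < 0" if "x \<in> S" for x
    using that \<rho>_pos \<open>\<Theta> < \<mu>\<close> by (simp add: mult_neg_pos)
  obtain e where "e > 0" and G_neg: "\<And>x \<delta>. x \<in> S \<Longrightarrow> \<bar>\<delta>\<bar> \<le> e \<Longrightarrow> G x \<delta> < 0"
    using negative_near_zero_uniformly_on_compact[OF \<open>compact S\<close> G_cont G_zero_neg] by blast
  have F_decreasing: "F x b < F x a" if "x \<in> S" "- e \<le> a" "a < b" "b \<le> e" for x a b
  proof (rule DERIV_neg_imp_decreasing[OF \<open>a < b\<close>])
    fix y assume "a \<le> y" "y \<le> b"
    with that have "G x y < 0"
      by (intro G_neg) auto
    with F_deriv show "\<exists>D. (F x has_real_derivative D) (at y) \<and> D < 0"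
      by blast
  qed
  have F_zero: "F x 0 = 0" if "x \<in> S" for x
    using solution[OF that] unfolding F_def by simp
  show thesis
  proof (rule that[OF \<open>e > 0\<close>, folded F_def])
    fix x \<delta> assume "x \<in> S" "0 < \<delta>" "\<delta> \<le> e"
    then show "F x \<delta> < 0"
      using F_decreasing[of x 0 \<delta>] F_zero \<open>e > 0\<close> by simp
  next
    fix x \<delta> assume "x \<in> S" "- e \<le> \<delta>" "\<delta> < 0"
    then show "F x \<delta> > 0"
      using F_decreasing[of x \<delta> 0] F_zero \<open>e > 0\<close> by simp
  qed
qed

lemma deriv_exp_decay: "deriv (\<lambda>s. c - a * exp (- \<Theta> * s)) t = \<Theta> * a * exp (- \<Theta> * t)"
  by (rule DERIV_imp_deriv) (auto intro!: derivative_eq_intros)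

lemma deriv_diff_scaled:
  assumes "(u has_real_derivative u') (at x)" "(\<rho> has_real_derivative \<rho>') (at x)"
  shows "deriv (\<lambda>y. u y - a * \<rho> y * c) x = u' - a * c * \<rho>'"
  by (rule DERIV_imp_deriv) (use assms in \<open>auto intro!: derivative_eq_intros\<close>)

lemma mult_contraction_mem:
  fixes c \<epsilon> e :: real
  assumes "0 < c" "c \<le> 1"
  shows "\<epsilon> \<in> {0<..e} \<Longrightarrow> \<epsilon> * c \<in> {0<..e}"
    and "\<epsilon> \<in> {-e..<0} \<Longrightarrow> \<epsilon> * c \<in> {-e..<0}"
proof -
  show "\<epsilon> * c \<in> {0<..e}" if "\<epsilon> \<in> {0<..e}"
  proof -
    have "\<epsilon> * c \<le> \<epsilon>"
      using mult_left_mono[OF \<open>c \<le> 1\<close>, of \<epsilon>] that by simp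
    moreover have "0 < \<epsilon> * c"
      using that \<open>0 < c\<close> by simp
    ultimately show ?thesis
      using that unfolding greaterThanAtMost_iff by linarith
  qed
  show "\<epsilon> * c \<in> {-e..<0}" if "\<epsilon> \<in> {-e..<0}"
  proof -
    have "\<epsilon> \<le> \<epsilon> * c"
      using mult_left_mono_neg[OF \<open>c \<le> 1\<close>, of \<epsilon>] that by simp
    moreover have "\<epsilon> * c < 0"
      using that \<open>0 < c\<close> by (simp add: mult_neg_pos)
    ultimately show ?thesis
      using that unfolding atLeastLessThan_iff by linarith
  qed
qed

lemma separated_perturbation_sign:
  fixes H :: "real \<Rightarrow> real \<Rightarrow> real \<Rightarrow> real" and u u' \<rho> \<rho>' :: "real \<Rightarrow> real"
  assumes H_smooth: "smooth_everywhere (\<lambda>(x, p, u). H x p u)"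
    and u_deriv: "\<And>x. (u has_real_derivative u' x) (at x)" and "continuous_on UNIV u'"
    and \<rho>_deriv: "\<And>x. (\<rho> has_real_derivative \<rho>' x) (at x)" and "continuous_on UNIV \<rho>'"
    and "compact S"
    and solution: "\<And>x. x \<in> S \<Longrightarrow> H x (u' x) (u x) = 0"
    and eigen: "\<And>x. x \<in> S \<Longrightarrow> Hp H x (u' x) (u x) * \<rho>' x + Hu H x (u' x) (u x) * \<rho> x = \<mu> * \<rho> x"
    and \<rho>_pos: "\<And>x. x \<in> S \<Longrightarrow> \<rho> x > 0"
    and \<Theta>: "0 \<le> \<Theta>" "\<Theta> < \<mu>"
  shows "\<exists>e > 0.
     (\<forall>\<epsilon> \<in> {0<..e}. \<forall>x \<in> S. \<forall>t \<ge> 0.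
        deriv (\<lambda>s. u x - \<epsilon> * \<rho> x * exp (- \<Theta> * s)) t
        + H x (deriv (\<lambda>y. u y - \<epsilon> * \<rho> y * exp (- \<Theta> * t)) x) (u x - \<epsilon> * \<rho> x * exp (- \<Theta> * t)) \<le> 0) \<and>
     (\<forall>\<epsilon> \<in> {-e..<0}. \<forall>x \<in> S. \<forall>t \<ge> 0.
        deriv (\<lambda>s. u x - \<epsilon> * \<rho> x * exp (- \<Theta> * s)) t
        + H x (deriv (\<lambda>y. u y - \<epsilon> * \<rho> y * exp (- \<Theta> * t)) x) (u x - \<epsilon> * \<rho> x * exp (- \<Theta> * t)) \<ge> 0)"
proof -
  have "continuous_on UNIV u" "continuous_on UNIV \<rho>"
    using u_deriv \<rho>_deriv by (meson DERIV_isCont continuous_at_imp_continuous_on)+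
  then obtain e where "e > 0" and
    sub: "\<And>x \<delta>. x \<in> S \<Longrightarrow> 0 < \<delta> \<Longrightarrow> \<delta> \<le> e \<Longrightarrow>
       \<Theta> * \<delta> * \<rho> x + H x (u' x - \<delta> * \<rho>' x) (u x - \<delta> * \<rho> x) < 0" and
    super: "\<And>x \<delta>. x \<in> S \<Longrightarrow> - e \<le> \<delta> \<Longrightarrow> \<delta> < 0 \<Longrightarrow>
       \<Theta> * \<delta> * \<rho> x + H x (u' x - \<delta> * \<rho>' x) (u x - \<delta> * \<rho> x) > 0"
    using eigenfunction_perturbation_sign[OF H_smooth _ \<open>continuous_on UNIV u'\<close> _ \<open>continuous_on UNIV \<rho>'\<close>
        \<open>compact S\<close> solution eigen \<rho>_pos \<Theta>(2)] by blast
  have residual: "deriv (\<lambda>s. u x - \<epsilon> * \<rho> x * exp (- \<Theta> * s)) t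
      + H x (deriv (\<lambda>y. u y - \<epsilon> * \<rho> y * exp (- \<Theta> * t)) x) (u x - \<epsilon> * \<rho> x * exp (- \<Theta> * t))
      = \<Theta> * (\<epsilon> * exp (- \<Theta> * t)) * \<rho> x
        + H x (u' x - \<epsilon> * exp (- \<Theta> * t) * \<rho>' x) (u x - \<epsilon> * exp (- \<Theta> * t) * \<rho> x)" for \<epsilon> x t
    unfolding deriv_exp_decay deriv_diff_scaled[OF u_deriv \<rho>_deriv] by (simp add: algebra_simps)
  have decay: "0 < exp (- \<Theta> * t)" "exp (- \<Theta> * t) \<le> 1" if "0 \<le> t" for t
    using \<Theta>(1) that by auto
  have "deriv (\<lambda>s. u x - \<epsilon> * \<rho> x * exp (- \<Theta> * s)) t
      + H x (deriv (\<lambda>y. u y - \<epsilon> * \<rho> y * exp (- \<Theta> * t)) x) (u x - \<epsilon> * \<rho> x * exp (- \<Theta> * t)) < 0"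
    if "\<epsilon> \<in> {0<..e}" "x \<in> S" "0 \<le> t" for \<epsilon> x t
    using mult_contraction_mem(1)[OF decay[OF that(3)] that(1)] unfolding residual
    by (intro sub[OF that(2)]) auto
  moreover have "deriv (\<lambda>s. u x - \<epsilon> * \<rho> x * exp (- \<Theta> * s)) t
      + H x (deriv (\<lambda>y. u y - \<epsilon> * \<rho> y * exp (- \<Theta> * t)) x) (u x - \<epsilon> * \<rho> x * exp (- \<Theta> * t)) > 0"
    if "\<epsilon> \<in> {-e..<0}" "x \<in> S" "0 \<le> t" for \<epsilon> x t
    using mult_contraction_mem(2)[OF decay[OF that(3)] that(1)] unfolding residual
    by (intro super[OF that(2)]) auto
  ultimately show ?thesis
    using \<open>e > 0\<close> by (intro exI[of _ e] conjI ballI allI impI) (auto intro: less_imp_le)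
qed

theorem lemma2p3:
  fixes H :: "real \<Rightarrow> real \<Rightarrow> real \<Rightarrow> real"
    and u0 :: "real \<Rightarrow> real"
    and \<kappa> \<Theta> :: real
    and B \<rho> :: "real \<Rightarrow> real"
    and \<mu> :: real
    and w :: "real \<Rightarrow> real \<Rightarrow> real \<Rightarrow> real"
  assumes H_smooth: "smooth_everywhere (\<lambda>(x, p, u). H x p u)"
    and H_per: "\<forall>p u. periodic1 (\<lambda>x. H x p u)"
    and H_convex: "\<forall>x p u. Hpp H x p u > 0"
    and H_superlinear: "\<forall>x u. filterlim (\<lambda>p. H x p u / \<bar>p\<bar>) at_top at_infinity"
    and kappa_pos: "\<kappa> > 0"
    and Hu_bound: "\<forall>x p u. \<bar>Hu H x p u\<bar> \<le> \<kappa>"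
    and u0_visc: "viscosity_solution_S H u0"
    and u0_smooth: "smooth_everywhere u0"
    and B_nonzero: "\<forall>x. u0 differentiable (at x) \<longrightarrow> Hp H x (deriv u0 x) (u0 x) \<noteq> 0"
    and B_def: "B = (\<lambda>x. Hp H x (deriv u0 x) (u0 x))"
    and mu_def: "\<mu> = integral {0..1} (\<lambda>\<tau>. Hu H \<tau> (deriv u0 \<tau>) (u0 \<tau>) / B \<tau>)
                     / integral {0..1} (\<lambda>\<tau>. 1 / B \<tau>)"
    and rho_def: "\<rho> = (\<lambda>x. exp (oint0 (\<lambda>\<tau>. (\<mu> - Hu H \<tau> (deriv u0 \<tau>) (u0 \<tau>)) / B \<tau>) x))"
    and mu_pos: "\<mu> > 0"
    and Theta: "0 \<le> \<Theta>" "\<Theta> < \<mu>"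
    and w_def: "w = (\<lambda>\<epsilon> x t. u0 x - \<epsilon> * \<rho> x * exp (- \<Theta> * t))"
  shows "\<exists>\<epsilon>0 > 0.
     (\<forall>\<epsilon> \<in> {0<..\<epsilon>0}. \<forall>x \<in> {0..1}. \<forall>t \<ge> 0.
        deriv (\<lambda>s. w \<epsilon> x s) t + H x (deriv (\<lambda>y. w \<epsilon> y t) x) (w \<epsilon> x t) \<le> 0) \<and>
     (\<forall>\<epsilon> \<in> {-\<epsilon>0..<0}. \<forall>x \<in> {0..1}. \<forall>t \<ge> 0.
        deriv (\<lambda>s. w \<epsilon> x s) t + H x (deriv (\<lambda>y. w \<epsilon> y t) x) (w \<epsilon> x t) \<ge> 0)"
proof -
  have u0_diff: "u0 differentiable (at x)" for x
    by (rule smooth_everywhere_imp_differentiable[OF u0_smooth])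
  then have u0_deriv: "(u0 has_real_derivative deriv u0 x) (at x)" for x
    by (simp add: DERIV_deriv_iff_real_differentiable)
  have u0_cont: "continuous_on UNIV u0" "continuous_on UNIV (deriv u0)"
    using u0_visc smooth_everywhere_continuous_on_deriv[OF u0_smooth]
    by (auto simp: viscosity_solution_S_def)
  define g where "g = (\<lambda>\<tau>. (\<mu> - Hu H \<tau> (deriv u0 \<tau>) (u0 \<tau>)) / B \<tau>)"
  have g_cont: "continuous_on UNIV g"
    unfolding g_def B_def using B_nonzero u0_diff
    by (intro continuous_intros continuous_on_Hp_compose[OF H_smooth] continuous_on_Hu_compose[OF H_smooth]
        u0_cont) auto
  have \<rho>_deriv: "(\<rho> has_real_derivative \<rho> x * g x) (at x)" for x
    unfolding rho_def g_def[symmetric] by (rule exp_oint0_has_real_derivative[OF g_cont])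
  have \<rho>'_cont: "continuous_on UNIV (\<lambda>x. \<rho> x * g x)"
    using \<rho>_deriv g_cont by (intro continuous_intros) (meson DERIV_isCont continuous_at_imp_continuous_on)
  have eigen: "Hp H x (deriv u0 x) (u0 x) * (\<rho> x * g x) + Hu H x (deriv u0 x) (u0 x) * \<rho> x = \<mu> * \<rho> x" for x
    using B_nonzero u0_diff unfolding g_def B_def by (simp add: field_simps)
  show ?thesis
    unfolding w_def
    by (rule separated_perturbation_sign[OF H_smooth u0_deriv u0_cont(2) \<rho>_deriv \<rho>'_cont compact_Icc
          viscosity_solution_S_imp_classical[OF u0_visc u0_diff u0_cont(2)] eigen _ Theta])
      (simp add: rho_def)
qed

end
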